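(* Let $m\ge1$ and $0\le r\le m(q-1)$, written $r=t(q-1)+s$ with $t\ge0$, $0\le s<q-1$, and let $1\le b\le q^m$. Then $RM_q(r,m)$ is a $b$-symbol MDS code if and only if either (a) $b\ge q^m-(q-s)q^{m-t-1}+1$, or (b) $RM_q(r,m)$ is a $1$-symbol MDS code (i.e., MDS in the Hamming metric).
   Context: Fix an enumeration $\mathbb{F}_q=\{\alpha_1=0,\alpha_2,\dots,\alpha_q\}$, order $\mathbb{F}_q$ by $\alpha_1<\dots<\alpha_q$, and order $\mathbb{F}_q^m$ lexicographically as $P_1<\dots<P_{q^m}$. $RM_q(r,m)=\{(f(P_1),\dots,f(P_{q^m})) : f\in\mathbb{F}_q[X_1,\dots,X_m],\ \deg f\le r\}$. For $\mathbf{x}\in\mathbb{F}_q^L$, $\chi_b(\mathbf{x})=\{i:(x_i,\dots,x_{i+b-1})\ne\mathbf{0}\}$ (indices mod $L$), $w_b(\mathbf{x})=|\chi_b(\mathbf{x})|$, $d_b(C)=\min_{\mathbf{0}\ne\mathbf{c}\in C}w_b(\mathbf{c})$. An $[n,k]_q$-linear code $C$ is a $b$-symbol MDS code if $d_b(C)=\min\{n-k+b,n\}$. *)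

theory Defs
  imports "HOL-Analysis.Analysis" "HOL-Library.Function_Algebras"
begin

text \<open>Vectors of length L over a field are functions nat => 'a (coordinates 0..L-1,
  zero outside). Scalar multiplication for the F_q-vector space of such functions.\<close>
definition fscale :: "'a::field \<Rightarrow> (nat \<Rightarrow> 'a) \<Rightarrow> (nat \<Rightarrow> 'a)" where
  "fscale c x = (\<lambda>i. c * x i)"

definition code_dim :: "(nat \<Rightarrow> 'a::field) set \<Rightarrow> nat" where
  "code_dim C = vector_space.dim fscale C"

definition chi_b :: "nat \<Rightarrow> nat \<Rightarrow> (nat \<Rightarrow> 'a::zero) \<Rightarrow> nat set" where
  "chi_b b L x = {i. i < L \<and> (\<exists>j<b. x ((i + j) mod L) \<noteq> 0)}"

definition w_b :: "nat \<Rightarrow> nat \<Rightarrow> (nat \<Rightarrow> 'a::zero) \<Rightarrow> nat" where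
  "w_b b L x = card (chi_b b L x)"

definition d_b :: "nat \<Rightarrow> nat \<Rightarrow> (nat \<Rightarrow> 'a::zero) set \<Rightarrow> nat" where
  "d_b b L C = Min {w_b b L c | c. c \<in> C \<and> (\<exists>i<L. c i \<noteq> 0)}"

definition b_symbol_MDS :: "nat \<Rightarrow> nat \<Rightarrow> (nat \<Rightarrow> 'a::field) set \<Rightarrow> bool" where
  "b_symbol_MDS b L C \<longleftrightarrow> d_b b L C = min (L - code_dim C + b) L"

definition exps :: "nat \<Rightarrow> nat \<Rightarrow> (nat \<Rightarrow> nat) set" where
  "exps m r = {e. (\<forall>i\<ge>m. e i = 0) \<and> (\<Sum>i<m. e i) \<le> r}"

definition peval :: "nat \<Rightarrow> nat \<Rightarrow> ((nat \<Rightarrow> nat) \<Rightarrow> 'a::comm_ring_1) \<Rightarrow> (nat \<Rightarrow> 'a) \<Rightarrow> 'a" where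
  "peval m r c x = (\<Sum>e\<in>exps m r. c e * (\<Prod>i<m. x i ^ e i))"

text \<open>The j-th point (0-based) of F_q^m in lexicographic order induced by the enumeration
  alpha of F_q (alpha 0 < alpha 1 < ... < alpha (q-1)); coordinate 0 is most significant.\<close>
definition lex_point :: "(nat \<Rightarrow> 'a::zero) \<Rightarrow> nat \<Rightarrow> nat \<Rightarrow> nat \<Rightarrow> nat \<Rightarrow> 'a" where
  "lex_point alpha q m j i = (if i < m then alpha ((j div q ^ (m - 1 - i)) mod q) else 0)"

definition RM :: "(nat \<Rightarrow> 'a::{field,finite}) \<Rightarrow> nat \<Rightarrow> nat \<Rightarrow> (nat \<Rightarrow> 'a) set" where
  "RM alpha r m = {(\<lambda>j. if j < CARD('a) ^ m
                        then peval m r c (lex_point alpha CARD('a) m j) else 0) | c. True}"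

end

theory Submission
  imports Defs "HOL-Computational_Algebra.Polynomial"
begin

text \<open>Write \<open>r = t (q - 1) + s\<close> and \<open>d = (q - s) q\<^sup>m\<^sup>-\<^sup>t\<^sup>-\<^sup>1\<close>. Every nonzero codeword of
  \<open>RM\<^sub>q(r, m)\<close> has Hamming weight at least \<open>d\<close> (induction on \<open>m\<close>, expanding a polynomial
  in its last variable), and the evaluation of
  \<open>\<Prod>\<^sub>i\<^sub><\<^sub>t (1 - x\<^sub>i\<^sup>q\<^sup>-\<^sup>1) \<Prod>\<^sub>u\<^sub><\<^sub>s (x\<^sub>t - \<alpha>\<^sub>q\<^sub>-\<^sub>1\<^sub>-\<^sub>u)\<close> attains it with support exactly
  the first \<open>d\<close> positions in lexicographic order.

  For any linear code of length \<open>n\<close> whose minimum weight \<open>d\<close> is attained by a word supported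
  on an initial segment, that word has \<open>b\<close>-symbol weight \<open>min (d + b - 1) n\<close>, which is
  also a lower bound for every nonzero codeword, so \<open>d\<^sub>b = min (d + b - 1) n\<close>. Against the
  \<open>b\<close>-symbol Singleton bound \<open>min (n - k + b) n\<close> this is an equality iff
  \<open>d + b - 1 \<ge> n\<close>, which is condition (a), or \<open>d = n - k + 1\<close>, i.e. the code is MDS.\<close>

interpretation fs: vector_space "fscale :: 'a::field \<Rightarrow> (nat \<Rightarrow> 'a) \<Rightarrow> _"
  by unfold_locales (auto simp: fscale_def fun_eq_iff algebra_simps)

section \<open>Symbol weights\<close>

lemma chi_b_subset: "chi_b b L x \<subseteq> {..<L}"
  by (auto simp: chi_b_def)

lemma finite_chi_b: "finite (chi_b b L x)"
  by (rule finite_subset[OF chi_b_subset]) simp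

lemma w_b_le_length: "w_b b L x \<le> L"
  unfolding w_b_def using card_mono[OF finite_lessThan chi_b_subset] by simp

lemma chi_b_1: "chi_b 1 L x = {i. i < L \<and> x i \<noteq> 0}"
  by (auto simp: chi_b_def)

lemma w_b_1: "w_b 1 L x = card {i. i < L \<and> x i \<noteq> 0}"
  unfolding w_b_def chi_b_1 ..

lemma chi_b_mono: "b \<le> b' \<Longrightarrow> chi_b b L x \<subseteq> chi_b b' L x"
  by (auto simp: chi_b_def; meson less_le_trans)

lemma chi_b_Suc:
  assumes "1 \<le> b"
  shows "chi_b (Suc b) L x = chi_b b L x \<union> {i. i < L \<and> Suc i mod L \<in> chi_b b L x}"
proof (intro set_eqI iffI)
  fix i assume "i \<in> chi_b (Suc b) L x"
  then obtain j where j: "i < L" "j < Suc b" "x ((i + j) mod L) \<noteq> 0"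
    by (auto simp: chi_b_def)
  show "i \<in> chi_b b L x \<union> {i. i < L \<and> Suc i mod L \<in> chi_b b L x}"
  proof (cases j)
    case 0
    thus ?thesis using j assms by (auto simp: chi_b_def intro!: exI[of _ 0])
  next
    case (Suc j')
    have "(Suc i mod L + j') mod L = (i + j) mod L"
      using Suc by (simp add: mod_add_left_eq)
    hence "Suc i mod L \<in> chi_b b L x"
      using j Suc by (auto simp: chi_b_def intro!: exI[of _ j'])
    thus ?thesis using j by auto
  qed
next
  fix i assume "i \<in> chi_b b L x \<union> {i. i < L \<and> Suc i mod L \<in> chi_b b L x}"
  thus "i \<in> chi_b (Suc b) L x"
  proof
    assume "i \<in> chi_b b L x"
    thus ?thesis using chi_b_mono[of b "Suc b"] by auto
  next
    assume "i \<in> {i. i < L \<and> Suc i mod L \<in> chi_b b L x}"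
    then obtain j where j: "i < L" "j < b" "x ((Suc i mod L + j) mod L) \<noteq> 0"
      by (auto simp: chi_b_def)
    have "(Suc i mod L + j) mod L = (i + Suc j) mod L"
      by (simp add: mod_add_left_eq)
    thus ?thesis using j by (auto simp: chi_b_def)
  qed
qed

lemma cyclic_pred_closed_eq_lessThan:
  assumes sub: "A \<subseteq> {..<L}" and a: "a \<in> A"
    and closed: "\<And>i. i < L \<Longrightarrow> Suc i mod L \<in> A \<Longrightarrow> i \<in> A"
  shows "A = {..<L}"
proof -
  have down: "i - k \<in> A" if "i \<in> A" "k \<le> i" for i k
    using that(2)
  proof (induction k)
    case (Suc k)
    hence ik: "i - k \<in> A" "i - k = Suc (i - Suc k)" by auto
    hence "Suc (i - Suc k) mod L = i - k" using sub by auto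
    thus ?case using closed[of "i - Suc k"] ik sub by auto
  qed (use that in simp)
  have "0 < L" using a sub by auto
  moreover have "0 \<in> A" using down[OF a, of a] by simp
  ultimately have top: "L - 1 \<in> A" using closed[of "L - 1"] by simp
  have "i \<in> A" if "i < L" for i
    using down[OF top, of "L - 1 - i"] that by simp
  thus ?thesis using sub by auto
qed

text \<open>Passing from \<open>b\<close> to \<open>b + 1\<close> either adds a new position to the
  \<open>b\<close>-support or the \<open>b\<close>-support is already closed under cyclic predecessor,
  hence everything.\<close>
lemma w_b_Suc_ge:
  assumes b: "1 \<le> b" and ne: "chi_b b L x \<noteq> {}"
  shows "min (w_b b L x + 1) L \<le> w_b (Suc b) L x"
proof (cases "chi_b (Suc b) L x = chi_b b L x")
  case True
  obtain a where "a \<in> chi_b b L x" using ne by auto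
  hence "chi_b b L x = {..<L}"
    by (rule cyclic_pred_closed_eq_lessThan[OF chi_b_subset])
      (use True chi_b_Suc[OF b, of L x] in blast)
  thus ?thesis using True by (simp add: w_b_def)
next
  case False
  hence "chi_b b L x \<subset> chi_b (Suc b) L x" using chi_b_mono[of b "Suc b" L x] by auto
  hence "card (chi_b b L x) < card (chi_b (Suc b) L x)"
    by (rule psubset_card_mono[OF finite_chi_b])
  thus ?thesis by (simp add: w_b_def)
qed

lemma w_b_ge:
  assumes "\<exists>i<L. x i \<noteq> 0" "1 \<le> b"
  shows "min (card {i. i < L \<and> x i \<noteq> 0} + b - 1) L \<le> w_b b L x"
  using assms(2)
proof (induction b rule: dec_induct)
  case base
  show ?case using w_b_1[of L x] by simp
next
  case (step b)
  have "chi_b 1 L x \<noteq> {}" using assms(1) unfolding chi_b_1 by auto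
  hence "chi_b b L x \<noteq> {}" using chi_b_mono[OF step.hyps(1), of L x] by auto
  thus ?case using w_b_Suc_ge[OF step.hyps(1)] step.IH by fastforce
qed

lemma w_b_le_of_support_lessThan:
  assumes supp: "\<And>j. x j \<noteq> 0 \<longleftrightarrow> j < d" and b: "1 \<le> b"
  shows "w_b b L x \<le> d + (b - 1)"
proof -
  have "chi_b b L x \<subseteq> {..<d} \<union> {L - (b - 1)..<L}"
  proof
    fix i assume "i \<in> chi_b b L x"
    then obtain j where j: "i < L" "j < b" "x ((i + j) mod L) \<noteq> 0"
      by (auto simp: chi_b_def)
    show "i \<in> {..<d} \<union> {L - (b - 1)..<L}"
    proof (rule ccontr)
      assume "i \<notin> {..<d} \<union> {L - (b - 1)..<L}"
      hence "d \<le> i" "i + j < L" using j by auto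
      thus False using j(3) supp[of "i + j"] by simp
    qed
  qed
  hence "w_b b L x \<le> card ({..<d} \<union> {L - (b - 1)..<L})"
    unfolding w_b_def by (rule card_mono[rotated]) simp
  also have "\<dots> \<le> card {..<d} + card {L - (b - 1)..<L}" by (rule card_Un_le)
  also have "\<dots> \<le> d + (b - 1)" by simp
  finally show ?thesis .
qed

lemma w_b_le_of_zero_on_lessThan:
  assumes zero: "\<And>i. i < p \<Longrightarrow> x i = 0" and "p \<le> L" "1 \<le> b" "b \<le> Suc p"
  shows "w_b b L x \<le> L - (Suc p - b)"
proof -
  have "chi_b b L x \<subseteq> {..<L} - {..<Suc p - b}"
  proof
    fix i assume "i \<in> chi_b b L x"
    then obtain j where j: "i < L" "j < b" "x ((i + j) mod L) \<noteq> 0"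
      by (auto simp: chi_b_def)
    show "i \<in> {..<L} - {..<Suc p - b}"
    proof (rule ccontr)
      assume "i \<notin> {..<L} - {..<Suc p - b}"
      hence "i + j < p" using j assms by auto
      thus False using j(3) zero \<open>p \<le> L\<close> by simp
    qed
  qed
  hence "w_b b L x \<le> card ({..<L} - {..<Suc p - b})"
    unfolding w_b_def by (rule card_mono[rotated]) simp
  also have "\<dots> = L - (Suc p - b)" using assms by (simp add: card_Diff_subset)
  finally show ?thesis .
qed

lemma d_b_le_w_b:
  assumes "c \<in> C" "\<exists>i<L. c i \<noteq> 0"
  shows "d_b b L C \<le> w_b b L c"
proof -
  have "{w_b b L c | c. c \<in> C \<and> (\<exists>i<L. c i \<noteq> 0)} \<subseteq> {..L}"
    using w_b_le_length by auto
  hence "finite {w_b b L c | c. c \<in> C \<and> (\<exists>i<L. c i \<noteq> 0)}"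
    by (rule finite_subset) simp
  thus ?thesis unfolding d_b_def by (rule Min_le) (use assms in auto)
qed

lemma le_d_b:
  assumes "\<exists>c\<in>C. \<exists>i<L. c i \<noteq> 0"
    and "\<And>c. c \<in> C \<Longrightarrow> \<exists>i<L. c i \<noteq> 0 \<Longrightarrow> x \<le> w_b b L c"
  shows "x \<le> d_b b L C"
proof -
  have "{w_b b L c | c. c \<in> C \<and> (\<exists>i<L. c i \<noteq> 0)} \<subseteq> {..L}"
    using w_b_le_length by auto
  hence "finite {w_b b L c | c. c \<in> C \<and> (\<exists>i<L. c i \<noteq> 0)}"
    by (rule finite_subset) simp
  thus ?thesis unfolding d_b_def using assms by (subst Min_ge_iff) auto
qed

section \<open>Linear codes\<close>

lemma sum_fun_apply: "(\<Sum>i\<in>S. f i) j = (\<Sum>i\<in>S. f i j)"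
  by (induction S rule: infinite_finite_induct) auto

lemma dim_le_card_of_zero_on_imp_zero:
  fixes C :: "(nat \<Rightarrow> 'a::field) set"
  assumes sub: "fs.subspace C" and fin: "finite S"
    and zero: "\<And>c. c \<in> C \<Longrightarrow> (\<forall>i\<in>S. c i = 0) \<Longrightarrow> c = 0"
  shows "fs.dim C \<le> card S"
proof -
  define restr where "restr = (\<lambda>x::nat \<Rightarrow> 'a. \<lambda>i. if i \<in> S then x i else 0)"
  define e where "e = (\<lambda>i::nat. \<lambda>j. if j = i then (1::'a) else 0)"
  have hom: "module_hom fscale fscale restr"
    by (rule module_hom.intro[OF fs.module_axioms fs.module_axioms], unfold_locales)
      (auto simp: restr_def fscale_def fun_eq_iff)
  obtain B where B: "B \<subseteq> C" "fs.independent B" "C \<subseteq> fs.span B" "card B = fs.dim C"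
    by (rule fs.basis_exists)
  have span: "fs.span B = C" using B sub by (simp add: fs.span_subspace)
  have inj: "inj_on restr (fs.span B)"
  proof (rule inj_onI)
    fix x y assume xy: "x \<in> fs.span B" "y \<in> fs.span B" "restr x = restr y"
    have "x - y \<in> C" using xy span sub by (metis fs.subspace_diff)
    moreover have "\<forall>i\<in>S. (x - y) i = 0" using xy(3) by (auto simp: restr_def fun_eq_iff) metis
    ultimately have "x - y = 0" by (rule zero)
    thus "x = y" by simp
  qed
  have "restr ` B \<subseteq> fs.span (e ` S)"
  proof
    fix z assume "z \<in> restr ` B"
    then obtain x where z: "z = restr x" by auto
    have "z = (\<Sum>i\<in>S. fscale (x i) (e i))"
      using fin by (auto simp: z restr_def e_def fscale_def fun_eq_iff sum_fun_apply
          if_distrib cong: if_cong)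
    also have "\<dots> \<in> fs.span (e ` S)"
      by (intro fs.span_sum fs.span_scale fs.span_base) auto
    finally show "z \<in> fs.span (e ` S)" .
  qed
  hence "card (restr ` B) \<le> card (e ` S)"
    using fs.independent_span_bound[OF _ module_hom.independent_injective_image[OF hom B(2) inj]] fin
    by blast
  also have "\<dots> \<le> card S" by (rule card_image_le[OF fin])
  finally show ?thesis
    using B(4) card_image[OF inj_on_subset[OF inj fs.span_superset]] by simp
qed

context
  fixes C :: "(nat \<Rightarrow> 'a::field) set" and n :: nat
  assumes sub: "fs.subspace C" and supp: "\<And>c j. c \<in> C \<Longrightarrow> n \<le> j \<Longrightarrow> c j = 0"
begin

lemma exists_nonzero_codeword_zero_on:
  assumes "S \<subseteq> {..<n}" "card S < code_dim C"
  shows "\<exists>c\<in>C. (\<exists>i<n. c i \<noteq> 0) \<and> (\<forall>i\<in>S. c i = 0)"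
proof (rule ccontr)
  assume none: "\<not> ?thesis"
  have "fs.dim C \<le> card S"
  proof (rule dim_le_card_of_zero_on_imp_zero[OF sub])
    show "finite S" using assms(1) finite_subset by blast
    fix c assume "c \<in> C" "\<forall>i\<in>S. c i = 0"
    thus "c = 0" using none supp by (auto simp: fun_eq_iff) (metis not_le)
  qed
  thus False using assms(2) by (simp add: code_dim_def)
qed

lemma code_dim_le_length: "code_dim C \<le> n"
proof (rule ccontr)
  assume "\<not> code_dim C \<le> n"
  then obtain c where "\<exists>i<n. c i \<noteq> 0" "\<forall>i\<in>{..<n}. c i = 0"
    using exists_nonzero_codeword_zero_on[of "{..<n}"] by auto
  thus False by auto
qed

text \<open>A nonzero codeword vanishing on the first \<open>k - 1\<close> positions has \<open>b\<close>-weight at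
  most \<open>n - k + b\<close>.\<close>
lemma d_b_le_Singleton:
  assumes nonzero: "\<exists>c\<in>C. \<exists>i<n. c i \<noteq> 0" and b: "1 \<le> b"
  shows "d_b b n C \<le> min (n - code_dim C + b) n"
proof -
  let ?k = "code_dim C"
  obtain c where "c \<in> C" "\<exists>i<n. c i \<noteq> 0" using nonzero by blast
  hence "d_b b n C \<le> n" using d_b_le_w_b w_b_le_length le_trans by metis
  moreover have "d_b b n C \<le> n - ?k + b" if "b \<le> ?k"
  proof -
    have "{..<?k - 1} \<subseteq> {..<n}" "card {..<?k - 1} < ?k" using code_dim_le_length b that by auto
    then obtain c where c: "c \<in> C" "\<exists>i<n. c i \<noteq> 0" "\<forall>i\<in>{..<?k - 1}. c i = 0"
      using exists_nonzero_codeword_zero_on by blast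
    have "w_b b n c \<le> n - (Suc (?k - 1) - b)"
      by (rule w_b_le_of_zero_on_lessThan) (use c b that code_dim_le_length in auto)
    thus ?thesis using d_b_le_w_b[OF c(1,2), of b] b that by linarith
  qed
  ultimately show ?thesis by (cases "b \<le> ?k") auto
qed

end

lemma d_b_eq_of_support_lessThan:
  assumes min_wt: "\<And>c. c \<in> C \<Longrightarrow> \<exists>i<n. c i \<noteq> 0 \<Longrightarrow> d \<le> card {j. j < n \<and> c j \<noteq> 0}"
    and c0: "c0 \<in> C" "\<And>j. c0 j \<noteq> 0 \<longleftrightarrow> j < d"
    and d: "1 \<le> d" "d \<le> n" and b: "1 \<le> b"
  shows "d_b b n C = min (d + b - 1) n"
proof (rule antisym)
  have "\<exists>i<n. c0 i \<noteq> 0" using c0(2)[of 0] d by (intro exI[of _ 0]) simp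
  hence "d_b b n C \<le> w_b b n c0" by (rule d_b_le_w_b[OF c0(1)])
  thus "d_b b n C \<le> min (d + b - 1) n"
    using w_b_le_of_support_lessThan[OF c0(2) b, of n] w_b_le_length[of b n c0] b by linarith
  show "min (d + b - 1) n \<le> d_b b n C"
  proof (rule le_d_b)
    show "\<exists>c\<in>C. \<exists>i<n. c i \<noteq> 0" using c0 \<open>\<exists>i<n. c0 i \<noteq> 0\<close> by blast
    fix c assume c: "c \<in> C" "\<exists>i<n. c i \<noteq> 0"
    thus "min (d + b - 1) n \<le> w_b b n c"
      using w_b_ge[OF c(2) b] min_wt[OF c] by linarith
  qed
qed

theorem b_symbol_MDS_iff_of_support_lessThan:
  fixes C :: "(nat \<Rightarrow> 'a::field) set"
  assumes sub: "fs.subspace C" and supp: "\<And>c j. c \<in> C \<Longrightarrow> n \<le> j \<Longrightarrow> c j = 0"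
    and min_wt: "\<And>c. c \<in> C \<Longrightarrow> \<exists>i<n. c i \<noteq> 0 \<Longrightarrow> d \<le> card {j. j < n \<and> c j \<noteq> 0}"
    and c0: "c0 \<in> C" "\<And>j. c0 j \<noteq> 0 \<longleftrightarrow> j < d"
    and d: "1 \<le> d" and b: "1 \<le> b"
  shows "b_symbol_MDS b n C \<longleftrightarrow> n + 1 \<le> b + d \<or> b_symbol_MDS 1 n C"
proof -
  let ?k = "code_dim C"
  have "d \<le> n" using supp[OF c0(1), of n] c0(2)[of n] by (cases "d \<le> n") auto
  have nonzero: "\<exists>c\<in>C. \<exists>i<n. c i \<noteq> 0"
    by (intro bexI[OF _ c0(1)] exI[of _ 0]) (use c0(2)[of 0] d \<open>d \<le> n\<close> in auto)
  have d_b: "d_b b' n C = min (d + b' - 1) n" if "1 \<le> b'" for b'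
    by (rule d_b_eq_of_support_lessThan[OF min_wt c0 d \<open>d \<le> n\<close> that])
  have "d \<le> n - ?k + 1"
    using d_b_le_Singleton[OF sub _ nonzero, of 1] supp \<open>d \<le> n\<close> d_b[of 1] by simp
  moreover have "?k \<le> n" by (rule code_dim_le_length[OF sub]) (rule supp)
  ultimately show ?thesis
    unfolding b_symbol_MDS_def d_b[OF b] d_b[OF order.refl] using b d \<open>d \<le> n\<close> by linarith
qed

section \<open>Polynomial functions\<close>

definition poly_fun :: "nat \<Rightarrow> nat \<Rightarrow> ((nat \<Rightarrow> 'a::comm_ring_1) \<Rightarrow> 'a) \<Rightarrow> bool" where
  "poly_fun m r f \<longleftrightarrow> (\<exists>c. \<forall>x. f x = peval m r c x)"

lemma finite_exps: "finite (exps m r)"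
proof -
  have "exps m r \<subseteq> {e. \<forall>i. (i \<in> {..<m} \<longrightarrow> e i \<in> {..r}) \<and> (i \<notin> {..<m} \<longrightarrow> e i = 0)}"
  proof
    fix e assume e: "e \<in> exps m r"
    have "e i \<le> r" if "i < m" for i
      using member_le_sum[of i "{..<m}" e] that e by (auto simp: exps_def)
    thus "e \<in> {e. \<forall>i. (i \<in> {..<m} \<longrightarrow> e i \<in> {..r}) \<and> (i \<notin> {..<m} \<longrightarrow> e i = 0)}"
      using e by (auto simp: exps_def)
  qed
  thus ?thesis by (rule finite_subset) (rule finite_set_of_finite_funs; simp)
qed

lemma poly_fun_monomial:
  assumes "\<forall>i\<ge>m. e i = 0" "(\<Sum>i<m. e i) \<le> r"
  shows "poly_fun m r (\<lambda>x. a * (\<Prod>i<m. x i ^ e i))"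
proof -
  have "e \<in> exps m r" using assms by (auto simp: exps_def)
  moreover have "(if P then a else 0) * z = (if P then a * z else 0)" for P and z :: 'a
    by simp
  ultimately show ?thesis unfolding poly_fun_def peval_def
    by (intro exI[of _ "\<lambda>e'. if e' = e then a else 0"]) (simp add: finite_exps)
qed

lemma poly_fun_const: "poly_fun m r (\<lambda>x. a)"
  using poly_fun_monomial[of m "\<lambda>_. 0" r a] by simp

lemma poly_fun_var:
  assumes "i < m" shows "poly_fun m 1 (\<lambda>x. x i)"
proof -
  define e where "e = (\<lambda>j. if j = i then 1 else 0::nat)"
  have "(\<lambda>x::nat \<Rightarrow> 'a. 1 * (\<Prod>j<m. x j ^ e j)) = (\<lambda>x. x i)"
    using assms by (simp add: e_def fun_eq_iff if_distrib cong: if_cong)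
  moreover have "poly_fun m 1 (\<lambda>x::nat \<Rightarrow> 'a. 1 * (\<Prod>j<m. x j ^ e j))"
    by (rule poly_fun_monomial) (use assms in \<open>auto simp: e_def\<close>)
  ultimately show ?thesis by (simp only:)
qed

lemma poly_fun_add:
  assumes "poly_fun m r f" "poly_fun m r g" shows "poly_fun m r (\<lambda>x. f x + g x)"
proof -
  obtain c1 c2 where "\<And>x. f x = peval m r c1 x" "\<And>x. g x = peval m r c2 x"
    using assms unfolding poly_fun_def by blast
  thus ?thesis unfolding poly_fun_def
    by (intro exI[of _ "\<lambda>e. c1 e + c2 e"]) (simp add: peval_def distrib_right sum.distrib)
qed

lemma poly_fun_sum:
  "finite I \<Longrightarrow> (\<And>i. i \<in> I \<Longrightarrow> poly_fun m r (f i)) \<Longrightarrow> poly_fun m r (\<lambda>x. \<Sum>i\<in>I. f i x)"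
  by (induction I rule: finite_induct) (auto intro: poly_fun_add poly_fun_const)

lemma poly_fun_mult:
  assumes "poly_fun m r1 f" "poly_fun m r2 g"
  shows "poly_fun m (r1 + r2) (\<lambda>x. f x * g x)"
proof -
  obtain c1 where c1: "\<And>x. f x = peval m r1 c1 x" using assms unfolding poly_fun_def by auto
  obtain c2 where c2: "\<And>x. g x = peval m r2 c2 x" using assms unfolding poly_fun_def by auto
  define P where "P = exps m r1 \<times> exps m r2"
  define add where "add = (\<lambda>p::(nat \<Rightarrow> nat) \<times> (nat \<Rightarrow> nat). \<lambda>i. fst p i + snd p i)"
  define c where "c = (\<lambda>e. \<Sum>p\<in>{p \<in> P. add p = e}. c1 (fst p) * c2 (snd p))"
  have add_P: "add ` P \<subseteq> exps m (r1 + r2)"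
    by (auto simp: add_def P_def exps_def sum.distrib)
  show ?thesis unfolding poly_fun_def
  proof (intro exI allI)
    fix x :: "nat \<Rightarrow> 'a"
    have mon: "(\<Prod>i<m. x i ^ add p i) = (\<Prod>i<m. x i ^ fst p i) * (\<Prod>i<m. x i ^ snd p i)" for p
      by (simp add: add_def power_add prod.distrib)
    have "f x * g x = (\<Sum>p\<in>P. c1 (fst p) * c2 (snd p) * (\<Prod>i<m. x i ^ add p i))"
      unfolding c1 c2 peval_def P_def sum_product sum.cartesian_product mon
      by (rule sum.cong) (auto simp: algebra_simps)
    also have "\<dots> = (\<Sum>e\<in>exps m (r1 + r2). \<Sum>p\<in>{p \<in> P. add p = e}.
                        c1 (fst p) * c2 (snd p) * (\<Prod>i<m. x i ^ add p i))"
      by (rule sum.group[OF _ finite_exps add_P, symmetric]) (simp add: P_def finite_exps)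
    also have "\<dots> = peval m (r1 + r2) c x"
      unfolding peval_def c_def sum_distrib_right by (intro sum.cong refl) auto
    finally show "f x * g x = peval m (r1 + r2) c x" .
  qed
qed

lemma poly_fun_prod:
  "finite I \<Longrightarrow> (\<And>i. i \<in> I \<Longrightarrow> poly_fun m (d i) (f i))
    \<Longrightarrow> poly_fun m (\<Sum>i\<in>I. d i) (\<lambda>x. \<Prod>i\<in>I. f i x)"
  by (induction I rule: finite_induct) (auto intro: poly_fun_mult poly_fun_const)

lemma poly_fun_diff: "poly_fun m r f \<Longrightarrow> poly_fun m r g \<Longrightarrow> poly_fun m r (\<lambda>x. f x - g x)"
  using poly_fun_add[of m r f "\<lambda>x. -1 * g x"] poly_fun_mult[OF poly_fun_const[of m 0 "-1"], of r g]
  by simp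

lemma poly_fun_cong_lessThan:
  assumes "poly_fun m r f" "\<forall>i<m. x i = y i" shows "f x = f y"
  using assms unfolding poly_fun_def peval_def by (auto intro!: sum.cong prod.cong)

section \<open>Finite fields\<close>

lemma two_le_card_field: "2 \<le> CARD('a::{field,finite})"
proof -
  have "card {0::'a, 1} \<le> CARD('a)" by (rule card_mono) auto
  thus ?thesis by simp
qed

lemma power_card_minus_one:
  fixes y :: "'a::{field,finite}"
  assumes "y \<noteq> 0" shows "y ^ (CARD('a) - 1) = 1"
proof -
  let ?N = "UNIV - {0::'a}"
  have inj: "inj_on ((*) y) ?N" using assms by (auto simp: inj_on_def)
  have "(*) y ` ?N = ?N"
  proof
    show "(*) y ` ?N \<subseteq> ?N" using assms by auto
    show "?N \<subseteq> (*) y ` ?N"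
    proof
      fix w assume "w \<in> ?N"
      hence "w = y * (w / y)" "w / y \<in> ?N" using assms by auto
      thus "w \<in> (*) y ` ?N" by blast
    qed
  qed
  hence "prod id ?N = prod id ((*) y ` ?N)" by simp
  also have "\<dots> = prod ((*) y) ?N" by (simp add: prod.reindex[OF inj])
  also have "\<dots> = y ^ card ?N * prod id ?N" by (simp add: prod.distrib)
  finally have "y ^ card ?N = 1" by (simp add: prod_zero_iff)
  moreover have "card ?N = CARD('a) - 1" by (simp add: card_Diff_subset)
  ultimately show ?thesis by simp
qed

definition reduce_exp :: "nat \<Rightarrow> nat \<Rightarrow> nat" where
  "reduce_exp q i = (if i = 0 then 0 else (i - 1) mod (q - 1) + 1)"

lemma reduce_exp_le: "reduce_exp q i \<le> i"
proof (cases "i = 0")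
  case False
  hence "reduce_exp q i = (i - 1) mod (q - 1) + 1" by (simp add: reduce_exp_def)
  thus ?thesis using False mod_less_eq_dividend[of "i - 1" "q - 1"] by linarith
qed (simp add: reduce_exp_def)

lemma reduce_exp_less:
  assumes "2 \<le> q" shows "reduce_exp q i < q"
proof (cases "i = 0")
  case False
  hence "reduce_exp q i = (i - 1) mod (q - 1) + 1" by (simp add: reduce_exp_def)
  thus ?thesis using assms mod_less_divisor[of "q - 1" "i - 1"] by linarith
qed (use assms in \<open>simp add: reduce_exp_def\<close>)

lemma power_reduce_exp:
  fixes y :: "'a::{field,finite}"
  shows "y ^ reduce_exp CARD('a) i = y ^ i"
proof (cases "y = 0 \<or> i = 0")
  case True
  thus ?thesis by (auto simp: reduce_exp_def)
next
  case False
  let ?Q = "CARD('a) - 1"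
  obtain j where i: "i = Suc j" using False by (cases i) auto
  have "y ^ j = (y ^ ?Q) ^ (j div ?Q) * y ^ (j mod ?Q)"
    by (metis mult_div_mod_eq power_add power_mult)
  also have "\<dots> = y ^ (j mod ?Q)" using power_card_minus_one[of y] False by simp
  finally show ?thesis by (simp add: reduce_exp_def i)
qed

text \<open>Since \<open>y ^ q = y\<close> on \<open>\<bbbF>\<^sub>q\<close>, a polynomial function in \<open>m + 1\<close> variables
  is a polynomial of degree \<open>< q\<close> in the last variable, with coefficients of
  complementary degree in the others.\<close>
lemma poly_fun_Suc_expand:
  fixes f :: "(nat \<Rightarrow> 'a::{field,finite}) \<Rightarrow> 'a"
  assumes "poly_fun (Suc m) r f"
  obtains h where "\<And>k. poly_fun m (r - k) (h k)" and "\<And>k x. r < k \<Longrightarrow> h k x = 0"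
    and "\<And>x y. f (x(m := y)) = (\<Sum>k<CARD('a). y ^ k * h k x)"
proof -
  let ?q = "CARD('a)"
  obtain c where c: "\<And>x. f x = peval (Suc m) r c x" using assms unfolding poly_fun_def by auto
  define E where "E = exps (Suc m) r"
  define h where "h = (\<lambda>k x. \<Sum>e\<in>{e \<in> E. reduce_exp ?q (e m) = k}. c e * (\<Prod>i<m. x i ^ e i))"
  have E: "(\<Sum>i<m. e i) + e m \<le> r" "\<forall>i\<ge>Suc m. e i = 0" if "e \<in> E" for e
    using that by (auto simp: E_def exps_def)
  have h_poly: "poly_fun m (r - k) (h k)" for k
    unfolding h_def
  proof (rule poly_fun_sum)
    fix e assume e: "e \<in> {e \<in> E. reduce_exp ?q (e m) = k}"
    have "(\<lambda>x. c e * (\<Prod>i<m. x i ^ e i)) = (\<lambda>x. c e * (\<Prod>i<m. x i ^ (e(m := 0)) i))"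
      by (auto simp: fun_eq_iff intro!: prod.cong)
    moreover have "poly_fun m (r - k) (\<lambda>x. c e * (\<Prod>i<m. x i ^ (e(m := 0)) i))"
    proof (rule poly_fun_monomial)
      show "\<forall>i\<ge>m. (e(m := 0)) i = 0" using E(2)[of e] e by auto
      have "(\<Sum>i<m. (e(m := 0)) i) = (\<Sum>i<m. e i)" by (rule sum.cong) auto
      moreover have "k \<le> e m" using e reduce_exp_le[of ?q "e m"] by auto
      ultimately show "(\<Sum>i<m. (e(m := 0)) i) \<le> r - k" using E(1)[of e] e by auto
    qed
    ultimately show "poly_fun m (r - k) (\<lambda>x. c e * (\<Prod>i<m. x i ^ e i))" by simp
  qed (simp add: E_def finite_exps)
  have h_zero: "h k x = 0" if "r < k" for k x
  proof -
    have empty: "{e \<in> E. reduce_exp ?q (e m) = k} = {}"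
      using that E reduce_exp_le[of ?q] by (auto) (metis le_add2 le_trans not_less)
    show ?thesis unfolding h_def empty by simp
  qed
  have "f x = (\<Sum>k<?q. x m ^ k * h k x)" for x
  proof -
    have "f x = (\<Sum>e\<in>E. x m ^ reduce_exp ?q (e m) * (c e * (\<Prod>i<m. x i ^ e i)))"
      unfolding c peval_def E_def by (intro sum.cong refl) (simp add: power_reduce_exp algebra_simps)
    also have "\<dots> = (\<Sum>k<?q. \<Sum>e\<in>{e \<in> E. reduce_exp ?q (e m) = k}.
                        x m ^ reduce_exp ?q (e m) * (c e * (\<Prod>i<m. x i ^ e i)))"
      by (rule sum.group[symmetric])
        (auto simp: E_def finite_exps reduce_exp_less two_le_card_field)
    also have "\<dots> = (\<Sum>k<?q. x m ^ k * h k x)"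
      unfolding h_def sum_distrib_left by (intro sum.cong refl) auto
    finally show ?thesis .
  qed
  moreover have "h k (x(m := y)) = h k x" for k x y
    by (rule poly_fun_cong_lessThan[OF h_poly]) simp
  ultimately have "f (x(m := y)) = (\<Sum>k<?q. y ^ k * h k x)" for x y
    by simp
  with h_poly h_zero show ?thesis by (rule that)
qed

lemma card_nonroots_ge:
  fixes a :: "nat \<Rightarrow> 'a::{field,finite}"
  assumes "a E \<noteq> 0"
  shows "CARD('a) - E \<le> card {y. (\<Sum>k\<le>E. a k * y ^ k) \<noteq> 0}"
proof -
  define p where "p = (\<Sum>k\<le>E. monom (a k) k)"
  have poly_p: "poly p y = (\<Sum>k\<le>E. a k * y ^ k)" for y
    by (simp add: p_def poly_sum poly_monom)
  have "coeff p E = a E" by (simp add: p_def coeff_sum)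
  hence "p \<noteq> 0" using assms by auto
  moreover have "degree p \<le> E" unfolding p_def
    by (rule degree_sum_le) (auto intro: order.trans[OF degree_monom_le])
  ultimately have "card {y. poly p y = 0} \<le> E" using card_poly_roots_bound by fastforce
  moreover have "{y. poly p y \<noteq> 0} = UNIV - {y. poly p y = 0}" by auto
  ultimately show ?thesis by (simp add: poly_p [symmetric] card_Diff_subset)
qed

section \<open>The minimum distance bound\<close>

definition points :: "nat \<Rightarrow> (nat \<Rightarrow> 'a::zero) set" where
  "points m = {x. \<forall>i\<ge>m. x i = 0}"

definition fun_weight :: "nat \<Rightarrow> ((nat \<Rightarrow> 'a::zero) \<Rightarrow> 'b::zero) \<Rightarrow> nat" where
  "fun_weight m f = card {x \<in> points m. f x \<noteq> 0}"

lemma finite_points: "finite (points m :: (nat \<Rightarrow> 'a::{zero,finite}) set)"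
proof -
  have "points m \<subseteq> {x::nat \<Rightarrow> 'a. \<forall>i. (i \<in> {..<m} \<longrightarrow> x i \<in> UNIV) \<and> (i \<notin> {..<m} \<longrightarrow> x i = 0)}"
    by (auto simp: points_def)
  thus ?thesis by (rule finite_subset) (rule finite_set_of_finite_funs; simp)
qed

lemma bij_betw_fun_upd_points:
  "bij_betw (\<lambda>(x, y). x(m := y)) (points m \<times> (UNIV :: 'a::zero set)) (points (Suc m))"
  unfolding bij_betw_def
proof
  show "inj_on (\<lambda>(x, y). x(m := y)) (points m \<times> (UNIV :: 'a set))"
  proof (rule inj_onI)
    fix p p' :: "(nat \<Rightarrow> 'a) \<times> 'a"
    assume "p \<in> points m \<times> UNIV" "p' \<in> points m \<times> UNIV"
      and eq: "(\<lambda>(x, y). x(m := y)) p = (\<lambda>(x, y). x(m := y)) p'"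
    then obtain x y x' y' where p: "p = (x, y)" "p' = (x', y')"
      and x: "x \<in> points m" "x' \<in> points m" by auto
    have "x i = x' i" for i
      using x fun_cong[OF eq, of i] by (cases "i = m") (auto simp: p points_def)
    thus "p = p'" using fun_cong[OF eq, of m] by (auto simp: p)
  qed
  show "(\<lambda>(x, y). x(m := y)) ` (points m \<times> (UNIV :: 'a set)) = points (Suc m)"
  proof
    show "(\<lambda>(x, y). x(m := y)) ` (points m \<times> (UNIV :: 'a set)) \<subseteq> points (Suc m)"
      by (auto simp: points_def)
    show "points (Suc m) \<subseteq> (\<lambda>(x, y). x(m := y)) ` (points m \<times> (UNIV :: 'a set))"
    proof
      fix x :: "nat \<Rightarrow> 'a" assume "x \<in> points (Suc m)"
      hence "x(m := 0) \<in> points m" by (auto simp: points_def)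
      moreover have "x = (\<lambda>(x, y). x(m := y)) (x(m := 0), x m)" by simp
      ultimately show "x \<in> (\<lambda>(x, y). x(m := y)) ` (points m \<times> UNIV)" by blast
    qed
  qed
qed

lemma card_points: "card (points m :: (nat \<Rightarrow> 'a::{zero,finite}) set) = CARD('a) ^ m"
proof (induction m)
  case 0
  have "points 0 = {\<lambda>_. 0 :: 'a}" by (auto simp: points_def)
  thus ?case by simp
next
  case (Suc m)
  thus ?case
    using bij_betw_same_card[OF bij_betw_fun_upd_points[of m, where 'a = 'a]]
    by (simp add: card_cartesian_product mult.commute)
qed

lemma fun_weight_Suc_ge:
  fixes f :: "(nat \<Rightarrow> 'a::{zero,finite}) \<Rightarrow> 'b::zero"
  assumes S: "S \<subseteq> points m" and fibre: "\<And>x. x \<in> S \<Longrightarrow> N \<le> card {y. f (x(m := y)) \<noteq> 0}"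
  shows "N * card S \<le> fun_weight (Suc m) f"
proof -
  let ?T = "\<lambda>x. {y. f (x(m := y)) \<noteq> 0}"
  have inj: "inj_on (\<lambda>(x, y). x(m := y)) (Sigma S ?T)"
    by (rule inj_on_subset[OF bij_betw_imp_inj_on[OF bij_betw_fun_upd_points[of m]]])
      (use S in auto)
  have "(\<lambda>(x, y). x(m := y)) ` Sigma S ?T \<subseteq> {x \<in> points (Suc m). f x \<noteq> 0}"
    using S by (auto simp: points_def)
  hence "card (Sigma S ?T) \<le> fun_weight (Suc m) f"
    unfolding fun_weight_def using card_inj_on_le[OF inj] finite_points
    by (metis (no_types, lifting) finite_subset mem_Collect_eq subsetI)
  moreover have "finite S" using S finite_points finite_subset by blast
  hence "card (Sigma S ?T) = (\<Sum>x\<in>S. card (?T x))" by (rule card_SigmaI) simp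
  moreover have "N * card S \<le> (\<Sum>x\<in>S. card (?T x))"
    using sum_mono[of S "\<lambda>_. N" "\<lambda>x. card (?T x)"] fibre by (simp add: mult.commute)
  ultimately show ?thesis by linarith
qed

definition rm_dist :: "nat \<Rightarrow> nat \<Rightarrow> nat \<Rightarrow> nat" where
  "rm_dist q r m =
    (if m * (q - 1) \<le> r then 1 else (q - r mod (q - 1)) * q ^ (m - r div (q - 1) - 1))"

lemma rm_dist_eq:
  assumes "r = t * (q - 1) + s" "s < q - 1" "t < m"
  shows "rm_dist q r m = (q - s) * q ^ (m - t - 1)"
proof -
  have "r < (t + 1) * (q - 1)" using assms by simp
  also have "\<dots> \<le> m * (q - 1)" using assms by (intro mult_right_mono) auto
  finally show ?thesis using assms by (simp add: rm_dist_def)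
qed

lemma rm_dist_le_power:
  assumes "2 \<le> q" shows "rm_dist q r m \<le> q ^ m"
proof (cases "m * (q - 1) \<le> r")
  case True
  thus ?thesis using assms by (simp add: rm_dist_def)
next
  case False
  hence "1 \<le> m" by (cases m) auto
  have "(q - r mod (q - 1)) * q ^ (m - r div (q - 1) - 1) \<le> q * q ^ (m - r div (q - 1) - 1)"
    by simp
  also have "\<dots> = q ^ Suc (m - r div (q - 1) - 1)" by simp
  also have "\<dots> \<le> q ^ m" using assms \<open>1 \<le> m\<close> by (intro power_increasing) auto
  finally show ?thesis using False by (simp add: rm_dist_def)
qed

lemma rm_dist_pos:
  assumes "2 \<le> q" shows "0 < rm_dist q r m"
proof -
  have "r mod (q - 1) < q" using assms mod_less_divisor[of "q - 1" r] by linarith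
  thus ?thesis by (simp add: rm_dist_def)
qed

lemma rm_dist_Suc_le_of_le_rem:
  assumes q: "2 \<le> q" and r: "r = t * (q - 1) + s" "s < q - 1" "t \<le> m" and E: "E \<le> s"
  shows "rm_dist q r (Suc m) \<le> (q - E) * rm_dist q (r - E) m"
proof -
  have lhs: "rm_dist q r (Suc m) = (q - s) * q ^ (m - t)"
    using rm_dist_eq[OF r(1,2)] r(3) by simp
  show ?thesis
  proof (cases "t = m")
    case True
    hence "r - E = m * (q - 1) + (s - E)" using r E by simp
    hence "rm_dist q (r - E) m = 1" by (simp add: rm_dist_def)
    thus ?thesis using lhs True E by simp
  next
    case False
    have "r - E = t * (q - 1) + (s - E)" using r E by simp
    hence rhs: "rm_dist q (r - E) m = (q - (s - E)) * q ^ (m - t - 1)"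
      using rm_dist_eq[of "r - E" t q "s - E" m] r False by simp
    have "m - t = Suc (m - t - 1)" using False r(3) by simp
    hence "q ^ (m - t) = q * q ^ (m - t - 1)" by (metis power_Suc)
    moreover have "(q - s) * q \<le> (q - E) * (q - (s - E))"
    proof -
      obtain u where u: "s = E + u" using le_Suc_ex[OF E] by blast
      have "s \<le> q" using r(2) by simp
      then obtain a where "q = s + a" using le_Suc_ex by blast
      thus ?thesis using u by (simp add: algebra_simps)
    qed
    ultimately show ?thesis using lhs rhs by (simp add: mult.assoc)
  qed
qed

lemma rm_dist_Suc_le_of_rem_less:
  assumes q: "2 \<le> q" and r: "r = t * (q - 1) + s" "t \<le> m" and E: "s < E" "E \<le> q - 1" "E \<le> r"
  shows "rm_dist q r (Suc m) \<le> (q - E) * rm_dist q (r - E) m"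
proof -
  obtain t' where t: "t = Suc t'" using r(1) E by (cases t) auto
  define s' where "s' = q - 1 + s - E"
  have "r - E = t' * (q - 1) + s'" "s' < q - 1" "t' < m" using r t E by (auto simp: s'_def)
  hence "rm_dist q (r - E) m = (q - s') * q ^ (m - t' - 1)" by (rule rm_dist_eq)
  hence rhs: "rm_dist q (r - E) m = (1 + (E - s)) * q ^ (m - t)" using t E by (simp add: s'_def Suc_diff_le)
  have lhs: "rm_dist q r (Suc m) = (q - s) * q ^ (m - t)"
    using rm_dist_eq[of r t q s "Suc m"] r E by simp
  have "q - s \<le> (q - E) * (1 + (E - s))"
  proof -
    have "1 \<le> q - E" using E q by simp
    have "q - s = (q - E) + (E - s)" using E by simp
    also have "\<dots> \<le> (q - E) + (q - E) * (E - s)"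
      using mult_le_mono1[OF \<open>1 \<le> q - E\<close>, of "E - s"] by simp
    also have "\<dots> = (q - E) * (1 + (E - s))" by (simp only: distrib_left mult_1_right)
    finally show ?thesis .
  qed
  thus ?thesis unfolding lhs rhs mult.assoc[symmetric] by (rule mult_le_mono1)
qed

lemma rm_dist_Suc_le:
  assumes q: "2 \<le> q" and E: "E \<le> q - 1" "E \<le> r"
  shows "rm_dist q r (Suc m) \<le> (q - E) * rm_dist q (r - E) m"
proof (cases "Suc m * (q - 1) \<le> r")
  case True
  thus ?thesis using rm_dist_pos[OF q, of "r - E" m] E q
    by (simp add: rm_dist_def[of q r] Suc_le_eq)
next
  case False
  define t s where "t = r div (q - 1)" and "s = r mod (q - 1)"
  have r: "r = t * (q - 1) + s" "s < q - 1"
    using q div_mult_mod_eq[of r "q - 1"] by (simp_all add: t_def s_def)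
  have "t \<le> m"
  proof (rule ccontr)
    assume "\<not> t \<le> m"
    hence "Suc m * (q - 1) \<le> t * (q - 1)" by (intro mult_right_mono) auto
    thus False using False r by simp
  qed
  show ?thesis
  proof (cases "E \<le> s")
    case True
    thus ?thesis by (rule rm_dist_Suc_le_of_le_rem[OF q r \<open>t \<le> m\<close>])
  next
    case False
    thus ?thesis using rm_dist_Suc_le_of_rem_less[OF q r(1) \<open>t \<le> m\<close> _ E] by simp
  qed
qed

text \<open>Expand \<open>f\<close> in the last variable: the top nonvanishing coefficient \<open>h\<^sub>E\<close>
  (with \<open>E \<le> r\<close>) is nonzero at \<open>rm_dist q (r - E) m\<close> points by induction, and
  above each of them \<open>f\<close> restricts to a nonzero polynomial of degree \<open>E\<close> in the last
  variable, which has at least \<open>q - E\<close> nonzeros.\<close>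
lemma rm_dist_le_fun_weight:
  fixes f :: "(nat \<Rightarrow> 'a::{field,finite}) \<Rightarrow> 'a"
  assumes "poly_fun m r f" "x0 \<in> points m" "f x0 \<noteq> 0"
  shows "rm_dist CARD('a) r m \<le> fun_weight m f"
  using assms
proof (induction m arbitrary: r f x0)
  case 0
  have "{x \<in> points 0. f x \<noteq> 0} \<noteq> {}" using 0 by auto
  moreover have "finite {x \<in> points 0. f x \<noteq> 0}"
    by (rule finite_subset[OF _ finite_points]) auto
  ultimately have "0 < fun_weight 0 f" by (simp add: fun_weight_def card_gt_0_iff)
  thus ?case by (simp add: rm_dist_def)
next
  case (Suc m)
  let ?q = "CARD('a)"
  obtain h where h_poly: "\<And>k. poly_fun m (r - k) (h k)" and h_zero: "\<And>k x. r < k \<Longrightarrow> h k x = 0"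
    and expand: "\<And>x y. f (x(m := y)) = (\<Sum>k<?q. y ^ k * h k x)"
    using poly_fun_Suc_expand[OF Suc.prems(1)] by blast
  define Z where "Z = {k. k < ?q \<and> (\<exists>x\<in>points m. h k x \<noteq> 0)}"
  have "Z \<noteq> {}"
  proof
    assume "Z = {}"
    have "x0(m := 0) \<in> points m" using Suc.prems(2) by (auto simp: points_def)
    hence "f ((x0(m := 0))(m := x0 m)) = 0"
      using expand[of "x0(m := 0)" "x0 m"] \<open>Z = {}\<close> by (auto simp: Z_def intro!: sum.neutral)
    thus False using Suc.prems(3) by simp
  qed
  define E where "E = Max Z"
  have "E \<in> Z" unfolding E_def by (rule Max_in) (use \<open>Z \<noteq> {}\<close> in \<open>simp_all add: Z_def\<close>)
  hence E: "E \<le> ?q - 1" "E \<le> r" using h_zero by (auto simp: Z_def) (meson not_le)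
  have above_E: "h k x = 0" if "k < ?q" "E < k" "x \<in> points m" for k x
  proof (rule ccontr)
    assume "h k x \<noteq> 0"
    hence "k \<in> Z" using that by (auto simp: Z_def)
    hence "k \<le> E" unfolding E_def by (rule Max_ge[rotated]) (simp add: Z_def)
    thus False using that by simp
  qed
  define S where "S = {x \<in> points m. h E x \<noteq> 0}"
  obtain x1 where "x1 \<in> points m" "h E x1 \<noteq> 0" using \<open>E \<in> Z\<close> by (auto simp: Z_def)
  hence IH: "rm_dist ?q (r - E) m \<le> card S"
    using Suc.IH[OF h_poly] by (simp add: fun_weight_def S_def)
  have fibre: "?q - E \<le> card {y. f (x(m := y)) \<noteq> 0}" if "x \<in> S" for x
  proof -
    have "f (x(m := y)) = (\<Sum>k\<le>E. h k x * y ^ k)" for y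
    proof -
      have "(\<Sum>k<?q. y ^ k * h k x) = (\<Sum>k\<le>E. y ^ k * h k x)"
        by (rule sum.mono_neutral_right)
          (use E above_E that two_le_card_field[where 'a = 'a] in \<open>auto simp: S_def\<close>)
      thus ?thesis using expand by (simp add: mult.commute)
    qed
    thus ?thesis using card_nonroots_ge[of "\<lambda>k. h k x" E] that by (simp add: S_def)
  qed
  have "rm_dist ?q r (Suc m) \<le> (?q - E) * rm_dist ?q (r - E) m"
    by (rule rm_dist_Suc_le[OF two_le_card_field E])
  also have "\<dots> \<le> (?q - E) * card S" using IH by (rule mult_left_mono) simp
  also have "\<dots> \<le> fun_weight (Suc m) f"
    by (rule fun_weight_Suc_ge) (use fibre in \<open>auto simp: S_def\<close>)
  finally show ?case .
qed

section \<open>Reed--Muller codes\<close>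

lemma power_diff_eq_mult: "t < m \<Longrightarrow> (q::nat) ^ (m - t) = q * q ^ (m - 1 - t)"
  by (metis Suc_diff_Suc diff_Suc_eq_diff_pred power_Suc)

definition lex_digit :: "nat \<Rightarrow> nat \<Rightarrow> nat \<Rightarrow> nat \<Rightarrow> nat" where
  "lex_digit q m j i = (j div q ^ (m - 1 - i)) mod q"

lemma lex_point_eq: "i < m \<Longrightarrow> lex_point alpha q m j i = alpha (lex_digit q m j i)"
  by (simp add: lex_point_def lex_digit_def)

lemma lex_point_in_points: "lex_point alpha q m j \<in> points m"
  by (simp add: points_def lex_point_def)

lemma digits_inj:
  fixes q :: nat
  assumes "0 < q" "j < q ^ m" "j' < q ^ m" "\<forall>i<m. (j div q ^ i) mod q = (j' div q ^ i) mod q"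
  shows "j = j'"
  using assms(2-)
proof (induction m arbitrary: j j')
  case (Suc m)
  have "j div q < q ^ m" "j' div q < q ^ m"
    using Suc.prems(1,2) assms(1) by (simp_all add: less_mult_imp_div_less mult.commute)
  moreover have "\<forall>i<m. (j div q div q ^ i) mod q = (j' div q div q ^ i) mod q"
    using Suc.prems(3) by (auto simp: div_mult2_eq)
  ultimately have "j div q = j' div q" by (rule Suc.IH)
  moreover have "j mod q = j' mod q" using Suc.prems(3)[rule_format, of 0] by simp
  ultimately show ?case by (metis div_mult_mod_eq)
qed simp

lemma lex_digit_eq_div:
  fixes q :: nat
  assumes "t < m" "j < q ^ (m - t)"
  shows "lex_digit q m j t = j div q ^ (m - 1 - t)"
proof -
  have "q ^ (m - t) = q * q ^ (m - 1 - t)" using assms(1) by (rule power_diff_eq_mult)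
  hence "j div q ^ (m - 1 - t) < q" using assms(2) by (simp add: less_mult_imp_div_less)
  thus ?thesis by (simp add: lex_digit_def)
qed

lemma lex_digits_zero_iff:
  fixes q :: nat
  assumes "0 < q" "t \<le> m" "j < q ^ m"
  shows "(\<forall>i<t. lex_digit q m j i = 0) \<longleftrightarrow> j < q ^ (m - t)"
  using assms(2)
proof (induction t)
  case (Suc t)
  have "q ^ (m - Suc t) \<le> q ^ (m - t)" using assms(1) by (intro power_increasing) auto
  hence "j < q ^ (m - t) \<and> j div q ^ (m - 1 - t) = 0 \<longleftrightarrow> j < q ^ (m - Suc t)"
    using assms(1) by (auto simp: div_eq_0_iff)
  thus ?case using Suc lex_digit_eq_div[of t m j q] by (auto simp: less_Suc_eq)
qed (use assms in simp)

lemma lex_digits_less_iff: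
  fixes q :: nat
  assumes "0 < q" "t < m" "j < q ^ m" "s \<le> q"
  shows "(\<forall>i<t. lex_digit q m j i = 0) \<and> lex_digit q m j t < q - s
           \<longleftrightarrow> j < (q - s) * q ^ (m - 1 - t)"
proof -
  have q: "q ^ (m - t) = q * q ^ (m - 1 - t)" using assms(2) by (rule power_diff_eq_mult)
  have "(q - s) * q ^ (m - 1 - t) \<le> q ^ (m - t)" unfolding q by (intro mult_right_mono) auto
  hence "j < q ^ (m - t) \<and> j div q ^ (m - 1 - t) < q - s \<longleftrightarrow> j < (q - s) * q ^ (m - 1 - t)"
    using assms(1) by (auto simp: less_mult_imp_div_less div_less_iff_less_mult)
  thus ?thesis
    using lex_digits_zero_iff[of q t m j] lex_digit_eq_div[of t m j q] assms by auto
qed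

context
  fixes alpha :: "nat \<Rightarrow> 'a::{field,finite}"
  assumes enum: "bij_betw alpha {..<CARD('a)} (UNIV :: 'a set)"
begin

lemma enum_eq_iff: "a < CARD('a) \<Longrightarrow> b < CARD('a) \<Longrightarrow> alpha a = alpha b \<longleftrightarrow> a = b"
  using enum by (auto simp: bij_betw_def inj_on_def)

lemma bij_betw_lex_point:
  "bij_betw (lex_point alpha CARD('a) m) {..<CARD('a) ^ m} (points m)"
proof -
  let ?q = "CARD('a)"
  have inj: "inj_on (lex_point alpha ?q m) {..<?q ^ m}"
  proof (rule inj_onI)
    fix j j' assume j: "j \<in> {..<?q ^ m}" "j' \<in> {..<?q ^ m}"
      and eq: "lex_point alpha ?q m j = lex_point alpha ?q m j'"
    show "j = j'"
    proof (rule digits_inj[of ?q])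
      show "\<forall>i<m. (j div ?q ^ i) mod ?q = (j' div ?q ^ i) mod ?q"
      proof (intro allI impI)
        fix i assume "i < m"
        hence "m - 1 - (m - 1 - i) = i" by simp
        thus "(j div ?q ^ i) mod ?q = (j' div ?q ^ i) mod ?q"
          using fun_cong[OF eq, of "m - 1 - i"] \<open>i < m\<close>
          by (simp add: lex_point_def enum_eq_iff)
      qed
    qed (use j in auto)
  qed
  moreover have "lex_point alpha ?q m ` {..<?q ^ m} = points m"
  proof (rule card_subset_eq[OF finite_points])
    show "lex_point alpha ?q m ` {..<?q ^ m} \<subseteq> points m" using lex_point_in_points by auto
    show "card (lex_point alpha ?q m ` {..<?q ^ m}) = card (points m :: (nat \<Rightarrow> 'a) set)"
      using card_image[OF inj] by (simp add: card_points)
  qed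
  ultimately show ?thesis by (simp add: bij_betw_def)
qed

end

definition codeword :: "(nat \<Rightarrow> 'a::{field,finite}) \<Rightarrow> nat \<Rightarrow> ((nat \<Rightarrow> 'a) \<Rightarrow> 'a) \<Rightarrow> nat \<Rightarrow> 'a" where
  "codeword alpha m f = (\<lambda>j. if j < CARD('a) ^ m then f (lex_point alpha CARD('a) m j) else 0)"

lemma mem_RM_iff: "c \<in> RM alpha r m \<longleftrightarrow> (\<exists>f. poly_fun m r f \<and> c = codeword alpha m f)"
proof
  assume "c \<in> RM alpha r m"
  then obtain cf where "c = codeword alpha m (peval m r cf)" by (auto simp: RM_def codeword_def)
  moreover have "poly_fun m r (peval m r cf)" by (auto simp: poly_fun_def)
  ultimately show "\<exists>f. poly_fun m r f \<and> c = codeword alpha m f" by blast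
next
  assume "\<exists>f. poly_fun m r f \<and> c = codeword alpha m f"
  then obtain f cf where c: "c = codeword alpha m f" and f: "\<And>x. f x = peval m r cf x"
    by (auto simp: poly_fun_def)
  have "f = peval m r cf" by (rule ext) (rule f)
  thus "c \<in> RM alpha r m" using c by (auto simp: RM_def codeword_def)
qed

lemma RM_subspace: "fs.subspace (RM alpha r m)"
  unfolding fs.subspace_def
proof (intro conjI ballI allI)
  show "0 \<in> RM alpha r m" unfolding mem_RM_iff
    by (rule exI[of _ "\<lambda>x. 0"]) (auto simp: poly_fun_const codeword_def fun_eq_iff)
next
  fix c c' assume "c \<in> RM alpha r m" "c' \<in> RM alpha r m"
  then obtain f g where "poly_fun m r f" "c = codeword alpha m f" "poly_fun m r g" "c' = codeword alpha m g"
    by (auto simp: mem_RM_iff)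
  thus "c + c' \<in> RM alpha r m" unfolding mem_RM_iff
    by (intro exI[of _ "\<lambda>x. f x + g x"]) (auto simp: poly_fun_add codeword_def fun_eq_iff)
next
  fix a c assume "c \<in> RM alpha r m"
  then obtain f where f: "poly_fun m r f" "c = codeword alpha m f" by (auto simp: mem_RM_iff)
  have "poly_fun m (0 + r) (\<lambda>x. a * f x)" by (rule poly_fun_mult[OF poly_fun_const f(1)])
  thus "fscale a c \<in> RM alpha r m" unfolding mem_RM_iff
    by (intro exI[of _ "\<lambda>x. a * f x"]) (auto simp: f codeword_def fun_eq_iff fscale_def)
qed

lemma RM_zero_beyond:
  fixes alpha :: "nat \<Rightarrow> 'a::{field,finite}"
  shows "c \<in> RM alpha r m \<Longrightarrow> CARD('a) ^ m \<le> j \<Longrightarrow> c j = 0"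
  by (auto simp: RM_def)

context
  fixes alpha :: "nat \<Rightarrow> 'a::{field,finite}"
  assumes enum: "bij_betw alpha {..<CARD('a)} (UNIV :: 'a set)"
begin

lemma card_support_codeword:
  "card {j. j < CARD('a) ^ m \<and> codeword alpha m f j \<noteq> 0} = fun_weight m f"
proof -
  let ?lp = "lex_point alpha CARD('a) m"
  have "bij_betw ?lp {j \<in> {..<CARD('a) ^ m}. f (?lp j) \<noteq> 0} {x \<in> points m. f x \<noteq> 0}"
    using bij_betw_lex_point[OF enum, of m]
    by (auto simp: bij_betw_def inj_on_def image_iff)
  moreover have "{j. j < CARD('a) ^ m \<and> codeword alpha m f j \<noteq> 0}
                   = {j \<in> {..<CARD('a) ^ m}. f (?lp j) \<noteq> 0}"
    by (auto simp: codeword_def)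
  ultimately show ?thesis unfolding fun_weight_def by (simp add: bij_betw_same_card)
qed

lemma RM_weight_ge:
  assumes "c \<in> RM alpha r m" "\<exists>i<CARD('a) ^ m. c i \<noteq> 0"
  shows "rm_dist CARD('a) r m \<le> card {j. j < CARD('a) ^ m \<and> c j \<noteq> 0}"
proof -
  obtain f where f: "poly_fun m r f" "c = codeword alpha m f" using assms(1) by (auto simp: mem_RM_iff)
  obtain i where "i < CARD('a) ^ m" "c i \<noteq> 0" using assms(2) by blast
  hence "f (lex_point alpha CARD('a) m i) \<noteq> 0" by (simp add: f codeword_def)
  hence "rm_dist CARD('a) r m \<le> fun_weight m f"
    by (rule rm_dist_le_fun_weight[OF f(1) lex_point_in_points])
  thus ?thesis by (simp add: f card_support_codeword)
qed

end

lemma rm_degree_split: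
  fixes q r m :: nat
  assumes q: "2 \<le> q" and r: "r \<le> m * (q - 1)"
  shows "r = r div (q - 1) * (q - 1) + r mod (q - 1)" "r mod (q - 1) < q - 1"
    and "r div (q - 1) \<le> m" "r div (q - 1) = m \<Longrightarrow> r mod (q - 1) = 0"
proof -
  show "r = r div (q - 1) * (q - 1) + r mod (q - 1)" by (rule div_mult_mod_eq[symmetric])
  show "r mod (q - 1) < q - 1" using q by simp
  show "r div (q - 1) \<le> m"
    using div_le_mono[OF r, of "q - 1"] q by simp
  show "r mod (q - 1) = 0" if "r div (q - 1) = m"
    using r that div_mult_mod_eq[of r "q - 1"] by simp
qed

lemma real_rm_dist:
  assumes q: "2 \<le> q" and r: "r \<le> m * (q - 1)"
  shows "real (rm_dist q r m)
           = real (q - r mod (q - 1)) * real q powi (int m - int (r div (q - 1)) - 1)"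
proof (cases "r div (q - 1) = m")
  case True
  hence "r mod (q - 1) = 0" "m * (q - 1) \<le> r" using rm_degree_split[OF q r] by auto
  thus ?thesis using True q by (simp add: rm_dist_def power_int_minus)
next
  case False
  hence "r div (q - 1) < m" using rm_degree_split[OF q r] by simp
  hence exponent: "int m - int (r div (q - 1)) - 1 = int (m - r div (q - 1) - 1)" by simp
  show ?thesis unfolding exponent power_int_of_nat
    using rm_dist_eq[OF rm_degree_split(1,2)[OF q r] \<open>r div (q - 1) < m\<close>] by simp
qed

text \<open>This witness of degree \<open>t (q - 1) + s\<close> is nonzero exactly when
  \<open>x\<^sub>0 = \<dots> = x\<^sub>t\<^sub>-\<^sub>1 = 0\<close> and \<open>x\<^sub>t\<close> is one of the \<open>q - s\<close> smallest field elements, i.e. on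
  the first \<open>(q - s) q\<^sup>m\<^sup>-\<^sup>t\<^sup>-\<^sup>1\<close> points.\<close>
definition rm_min_poly :: "(nat \<Rightarrow> 'a::{field,finite}) \<Rightarrow> nat \<Rightarrow> nat \<Rightarrow> (nat \<Rightarrow> 'a) \<Rightarrow> 'a" where
  "rm_min_poly alpha t s x =
    (\<Prod>i<t. 1 - x i ^ (CARD('a) - 1)) * (\<Prod>u<s. x t - alpha (CARD('a) - 1 - u))"

lemma poly_fun_rm_min_poly:
  fixes alpha :: "nat \<Rightarrow> 'a::{field,finite}"
  assumes "t \<le> m" "0 < s \<Longrightarrow> t < m"
  shows "poly_fun m (t * (CARD('a) - 1) + s) (rm_min_poly alpha t s)"
proof -
  let ?q = "CARD('a)"
  have "poly_fun m (\<Sum>i<t. ?q - 1) (\<lambda>x. \<Prod>i<t. 1 - x i ^ (?q - 1))"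
  proof (rule poly_fun_prod)
    fix i assume "i \<in> {..<t}"
    hence "poly_fun m (\<Sum>_<?q - 1. 1) (\<lambda>x. \<Prod>_<?q - 1. x i)"
      using assms(1) by (intro poly_fun_prod poly_fun_var) auto
    thus "poly_fun m (?q - 1) (\<lambda>x. 1 - x i ^ (?q - 1))"
      by (intro poly_fun_diff[OF poly_fun_const]) simp
  qed simp
  moreover have "poly_fun m (\<Sum>u<s. 1) (\<lambda>x. \<Prod>u<s. x t - alpha (?q - 1 - u))"
    using assms(2) by (intro poly_fun_prod poly_fun_diff poly_fun_var poly_fun_const) auto
  ultimately show ?thesis
    unfolding rm_min_poly_def using poly_fun_mult by (fastforce simp: mult.commute)
qed

lemma rm_min_poly_nonzero_iff:
  fixes x :: "nat \<Rightarrow> 'a::{field,finite}"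
  shows "rm_min_poly alpha t s x \<noteq> 0
           \<longleftrightarrow> (\<forall>i<t. x i = 0) \<and> (\<forall>u<s. x t \<noteq> alpha (CARD('a) - 1 - u))"
proof -
  have "1 - y ^ (CARD('a) - 1) \<noteq> 0 \<longleftrightarrow> y = 0" for y :: 'a
    using power_card_minus_one[of y] two_le_card_field[where 'a = 'a]
    by (cases "y = 0") (auto simp: power_0_left)
  thus ?thesis by (simp add: rm_min_poly_def prod_zero_iff Ball_def)
qed

lemma avoids_top_values_iff:
  fixes d q s :: nat
  assumes "d < q"
  shows "(\<forall>u<s. d \<noteq> q - 1 - u) \<longleftrightarrow> d < q - s"
proof
  assume H: "\<forall>u<s. d \<noteq> q - 1 - u"
  show "d < q - s"
  proof (rule ccontr)
    assume "\<not> d < q - s"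
    hence "q - 1 - d < s" using assms by linarith
    thus False using H[rule_format, of "q - 1 - d"] assms by simp
  qed
qed (use assms in auto)

context
  fixes alpha :: "nat \<Rightarrow> 'a::{field,finite}"
  assumes enum: "bij_betw alpha {..<CARD('a)} (UNIV :: 'a set)" and alpha0: "alpha 0 = 0"
begin

lemma rm_min_poly_lex_point_nonzero_iff:
  assumes t: "t \<le> m" "t = m \<Longrightarrow> s = 0" and s: "s < CARD('a) - 1" and j: "j < CARD('a) ^ m"
  shows "rm_min_poly alpha t s (lex_point alpha CARD('a) m j) \<noteq> 0
           \<longleftrightarrow> j < rm_dist CARD('a) (t * (CARD('a) - 1) + s) m"
proof -
  let ?q = "CARD('a)" and ?d = "lex_digit CARD('a) m j"
  have q: "2 \<le> ?q" by (rule two_le_card_field)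
  have digit: "?d i < ?q" for i by (simp add: lex_digit_def)
  have zero_iff: "alpha a = 0 \<longleftrightarrow> a = 0" if "a < ?q" for a
    using enum_eq_iff[OF enum that, of 0] alpha0 q by simp
  have first: "rm_min_poly alpha t s (lex_point alpha ?q m j) \<noteq> 0
                \<longleftrightarrow> (\<forall>i<t. ?d i = 0) \<and> (\<forall>u<s. lex_point alpha ?q m j t \<noteq> alpha (?q - 1 - u))"
    using t(1) by (auto simp: rm_min_poly_nonzero_iff lex_point_eq zero_iff digit)
  show ?thesis
  proof (cases "t = m")
    case True
    have "s = 0" using t(2) True by simp
    show ?thesis unfolding first
      using True \<open>s = 0\<close> lex_digits_zero_iff[of ?q t m j] j by (simp add: rm_dist_def)
  next
    case False
    hence "t < m" using t(1) by simp
    have "(\<forall>u<s. alpha (?d t) \<noteq> alpha (?q - 1 - u)) \<longleftrightarrow> ?d t < ?q - s"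
      using enum_eq_iff[OF enum] digit avoids_top_values_iff[OF digit, of s] s by auto
    thus ?thesis
      using lex_digits_less_iff[of ?q t m j s] rm_dist_eq[of _ t ?q s m] \<open>t < m\<close> s j
      by (simp add: first lex_point_eq)
  qed
qed

lemma RM_min_weight_codeword:
  assumes r: "r \<le> m * (CARD('a) - 1)"
  shows "\<exists>c\<in>RM alpha r m. \<forall>j. c j \<noteq> 0 \<longleftrightarrow> j < rm_dist CARD('a) r m"
proof -
  let ?q = "CARD('a)"
  define t s where "t = r div (?q - 1)" and "s = r mod (?q - 1)"
  note split = rm_degree_split[OF two_le_card_field r, folded t_def s_def]
  have "0 < s \<Longrightarrow> t < m" using split(3,4) by fastforce
  hence "poly_fun m r (rm_min_poly alpha t s)"
    using poly_fun_rm_min_poly[where alpha = alpha, OF split(3)] split(1) by simp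
  hence "codeword alpha m (rm_min_poly alpha t s) \<in> RM alpha r m"
    unfolding mem_RM_iff by blast
  moreover have "codeword alpha m (rm_min_poly alpha t s) j \<noteq> 0 \<longleftrightarrow> j < rm_dist ?q r m" for j
  proof (cases "j < ?q ^ m")
    case True
    thus ?thesis using rm_min_poly_lex_point_nonzero_iff[OF split(3,4,2) True] split(1)
      by (simp add: codeword_def)
  next
    case False
    thus ?thesis using rm_dist_le_power[OF two_le_card_field[where 'a = 'a], of r m]
      by (simp add: codeword_def)
  qed
  ultimately show ?thesis by blast
qed

end

theorem mainTheorem10:
  fixes alpha :: "nat \<Rightarrow> 'a::{field,finite}" and r m b :: nat
  defines "q \<equiv> CARD('a)"
  defines "t \<equiv> r div (q - 1)"
  defines "s \<equiv> r mod (q - 1)"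
  assumes enum: "bij_betw alpha {..<q} (UNIV :: 'a set)" and alpha0: "alpha 0 = 0"
    and m: "1 \<le> m" and r: "r \<le> m * (q - 1)"
    and b: "1 \<le> b" "b \<le> q ^ m"
  shows "b_symbol_MDS b (q ^ m) (RM alpha r m) \<longleftrightarrow>
           (real b \<ge> real (q ^ m) - real (q - s) * real q powi (int m - int t - 1) + 1
            \<or> b_symbol_MDS 1 (q ^ m) (RM alpha r m))"
proof -
  have q: "2 \<le> q" unfolding q_def by (rule two_le_card_field)
  obtain c0 where c0: "c0 \<in> RM alpha r m" "\<And>j. c0 j \<noteq> 0 \<longleftrightarrow> j < rm_dist q r m"
    using RM_min_weight_codeword[OF enum[unfolded q_def] alpha0 r[unfolded q_def]]
    unfolding q_def by blast
  have "b_symbol_MDS b (q ^ m) (RM alpha r m)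
          \<longleftrightarrow> q ^ m + 1 \<le> b + rm_dist q r m \<or> b_symbol_MDS 1 (q ^ m) (RM alpha r m)"
  proof (rule b_symbol_MDS_iff_of_support_lessThan[OF RM_subspace _ _ c0 _ b(1)])
    show "c j = 0" if "c \<in> RM alpha r m" "q ^ m \<le> j" for c j
      using RM_zero_beyond that by (simp add: q_def)
    show "rm_dist q r m \<le> card {j. j < q ^ m \<and> c j \<noteq> 0}"
      if "c \<in> RM alpha r m" "\<exists>i<q ^ m. c i \<noteq> 0" for c
      using RM_weight_ge[OF enum[unfolded q_def]] that by (simp add: q_def)
    show "1 \<le> rm_dist q r m" using rm_dist_pos[OF q] by (simp add: Suc_le_eq)
  qed
  moreover have "real (rm_dist q r m) = real (q - s) * real q powi (int m - int t - 1)"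
    unfolding s_def t_def by (rule real_rm_dist[OF q r])
  ultimately show ?thesis by linarith
qed

end
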